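(* Let $\Lambda$ be a full-rank lattice in $\mathbb{R}^n$ and let $\Lambda_1\subseteq\Lambda$ be an arbitrary full-rank sublattice. Assume $B_1 > 2\nu(\Lambda_1)$. Let $\lambda$ be uniformly distributed on $\Lambda\cap[0,B_1)^n$. Then the total variation distance between the uniform distribution on $\Lambda/\Lambda_1$ and the distribution of $\lambda+\Lambda_1\in\Lambda/\Lambda_1$ is at most \[ 1 - \frac{(B_1-2\nu(\Lambda_1))^n}{(B_1+2\nu(\Lambda))^n}. \]
   Context: For a full-rank lattice $L$, $\nu(L)=\sup_{x\in\mathbb{R}^n}\min_{\lambda\in L}\|x-\lambda\|_2$ is its covering radius. The total variation distance between distributions $P,Q$ on a finite set $S$ is $\tfrac12\sum_{s\in S}|P(s)-Q(s)|$. *)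

theory Defs
  imports "HOL-Analysis.Analysis"
begin

definition full_rank_lattice :: "(real^'n) set \<Rightarrow> bool" where
  "full_rank_lattice L \<longleftrightarrow>
     (\<exists>b :: 'n \<Rightarrow> real^'n. inj b \<and> independent (range b) \<and>
        L = {x. \<exists>c :: 'n \<Rightarrow> int. x = (\<Sum>i\<in>UNIV. of_int (c i) *\<^sub>R b i)})"

definition covering_radius :: "(real^'n) set \<Rightarrow> real" where
  "covering_radius L = (SUP x. (INF l\<in>L. dist x l))"

definition lattice_cosets :: "(real^'n) set \<Rightarrow> (real^'n) set \<Rightarrow> (real^'n) set set" where
  "lattice_cosets L L1 = (\<lambda>l. (\<lambda>m. l + m) ` L1) ` L"

definition box_points :: "(real^'n) set \<Rightarrow> real \<Rightarrow> (real^'n) set" where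
  "box_points L B = {x \<in> L. \<forall>i. 0 \<le> x $ i \<and> x $ i < B}"

text \<open>Total variation distance between the uniform distribution on L/L1 and the law of
  lambda + L1, where lambda is uniform on box_points L B.\<close>
definition coset_tv :: "(real^'n) set \<Rightarrow> (real^'n) set \<Rightarrow> real \<Rightarrow> real" where
  "coset_tv L L1 B =
     (1/2) * (\<Sum>C\<in>lattice_cosets L L1.
        \<bar>real (card (box_points L B \<inter> C)) / real (card (box_points L B))
          - 1 / real (card (lattice_cosets L L1))\<bar>)"

end

theory Submission
  imports Defs "HOL-Real_Asymp.Real_Asymp"
begin

text \<open>
  Let \<open>V\<close> and \<open>V\<^sub>1\<close> be the volumes of the Voronoi cells of \<open>L\<close> and \<open>L\<^sub>1\<close>. The translates of
  the Voronoi cell of a lattice by the points of one of its cosets lying in \<open>[0,B)\<^sup>n\<close> cover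
  \<open>(\<nu>, B - \<nu>)\<^sup>n\<close> and, overlapping only in null sets, fit into \<open>[-\<nu>, B + \<nu>]\<^sup>n\<close>; so such a
  coset has between \<open>(B - 2\<nu>)\<^sup>n / V\<close> and \<open>(B + 2\<nu>)\<^sup>n / V\<close> points in the box. Counting the
  points of \<open>L\<close> once directly and once coset by coset and letting \<open>B \<rightarrow> \<infinity>\<close> gives
  \<open>V\<^sub>1 \<le> [L : L\<^sub>1] V\<close>. Hence every coset of \<open>L\<^sub>1\<close> has probability at least
  \<open>(B\<^sub>1 - 2\<nu>(L\<^sub>1))\<^sup>n / (V\<^sub>1 N)\<close>, where \<open>N \<le> (B\<^sub>1 + 2\<nu>(L))\<^sup>n / V\<close> is the number of points of \<open>L\<close>
  in the box, and a distribution on \<open>k\<close> points each of mass at least \<open>A\<close> is within total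
  variation distance \<open>1 - k A\<close> of the uniform one.
\<close>

lemma full_rank_lattice_linear_image:
  assumes "full_rank_lattice (L :: (real^'n) set)"
  obtains g :: "real^'n \<Rightarrow> real^'n" where "linear g" "inj g"
    "L = range (\<lambda>c::'n\<Rightarrow>int. g (\<chi> i. of_int (c i)))"
proof -
  obtain b :: "'n \<Rightarrow> real^'n" where b: "inj b" "independent (range b)"
    "L = {x. \<exists>c :: 'n \<Rightarrow> int. x = (\<Sum>i\<in>UNIV. of_int (c i) *\<^sub>R b i)}"
    using assms unfolding full_rank_lattice_def by blast
  define g where "g y = (\<Sum>i\<in>UNIV. (y$i) *\<^sub>R b i)" for y :: "real^'n"
  have lin: "linear g"
    by (rule linearI) (simp_all add: g_def scaleR_add_left sum.distrib scaleR_sum_right)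
  have "inj g"
  proof (subst linear_injective_0[OF lin], intro allI impI)
    fix y assume y0: "g y = 0"
    show "y = 0"
    proof (rule ccontr)
      assume "y \<noteq> 0"
      then obtain j where j: "y$j \<noteq> 0" by (metis vec_eq_iff zero_index)
      define u where "u v = y $ (inv b v)" for v
      have "(\<Sum>v\<in>range b. u v *\<^sub>R v) = g y"
        using b(1) by (simp add: sum.reindex u_def g_def)
      with y0 have "(\<Sum>v\<in>range b. u v *\<^sub>R v) = 0" by simp
      moreover have "u (b j) \<noteq> 0" using b(1) j by (simp add: u_def)
      ultimately have "dependent (range b)"
        by (subst dependent_finite) auto
      with b(2) show False by simp
    qed
  qed
  moreover have "L = range (\<lambda>c::'n\<Rightarrow>int. g (\<chi> i. of_int (c i)))"
    unfolding b(3) g_def by auto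
  ultimately show ?thesis using that lin by blast
qed

lemma full_rank_lattice_zero:
  assumes "full_rank_lattice (L :: (real^'n) set)"
  shows "0 \<in> L"
proof -
  obtain b :: "'n \<Rightarrow> real^'n"
    where "L = {x. \<exists>c :: 'n \<Rightarrow> int. x = (\<Sum>i\<in>UNIV. of_int (c i) *\<^sub>R b i)}"
    using assms unfolding full_rank_lattice_def by blast
  then show ?thesis by (auto intro: exI[of _ "\<lambda>_. 0"])
qed

lemma full_rank_lattice_diff:
  assumes "full_rank_lattice (L :: (real^'n) set)" "x \<in> L" "y \<in> L"
  shows "x - y \<in> L"
proof -
  obtain b :: "'n \<Rightarrow> real^'n"
    where L: "L = {x. \<exists>c :: 'n \<Rightarrow> int. x = (\<Sum>i\<in>UNIV. of_int (c i) *\<^sub>R b i)}"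
    using assms unfolding full_rank_lattice_def by blast
  obtain c d where "x = (\<Sum>i\<in>UNIV. of_int (c i) *\<^sub>R b i)" "y = (\<Sum>i\<in>UNIV. of_int (d i) *\<^sub>R b i)"
    using assms(2,3) L by auto
  then have "x - y = (\<Sum>i\<in>UNIV. of_int (c i - d i) *\<^sub>R b i)"
    by (simp add: sum_subtractf scaleR_diff_left)
  then show ?thesis unfolding L by (intro CollectI exI[of _ "\<lambda>i. c i - d i"])
qed

lemma full_rank_lattice_add:
  assumes "full_rank_lattice (L :: (real^'n) set)" "x \<in> L" "y \<in> L"
  shows "x + y \<in> L"
proof -
  have "0 - y \<in> L" by (rule full_rank_lattice_diff[OF assms(1) full_rank_lattice_zero[OF assms(1)] assms(3)])
  then show ?thesis using full_rank_lattice_diff[OF assms(1,2)] by force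
qed

lemma finite_full_rank_lattice_Int_cball:
  assumes "full_rank_lattice (L :: (real^'n) set)"
  shows "finite (L \<inter> cball 0 r)"
proof -
  obtain g :: "real^'n \<Rightarrow> real^'n" where g: "linear g" "inj g"
    "L = range (\<lambda>c::'n\<Rightarrow>int. g (\<chi> i. of_int (c i)))"
    using full_rank_lattice_linear_image[OF assms] by metis
  obtain K where K: "K > 0" "\<And>x. K * norm x \<le> norm (g x)"
    using linear_inj_bounded_below_pos[OF g(1,2)] by metis
  define M where "M = ceiling (r / K)"
  have "L \<inter> cball 0 r \<subseteq> (\<lambda>c::'n\<Rightarrow>int. g (\<chi> i. of_int (c i))) ` (PiE UNIV (\<lambda>_. {-M..M}))"
  proof
    fix x assume x: "x \<in> L \<inter> cball 0 r"
    then obtain c where c: "x = g (\<chi> i. of_int (c i))" using g(3) by auto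
    have "c i \<in> {-M..M}" for i
    proof -
      have "\<bar>real_of_int (c i)\<bar> \<le> norm (\<chi> i. real_of_int (c i))"
        using component_le_norm_cart[of "\<chi> i. real_of_int (c i)" i] by simp
      also have "\<dots> \<le> r / K"
        using K(2)[of "\<chi> i. real_of_int (c i)"] x c K(1) by (simp add: field_simps)
      also have "\<dots> \<le> real_of_int M" unfolding M_def by (rule le_of_int_ceiling)
      finally show ?thesis by (simp add: abs_le_iff)
    qed
    then show "x \<in> (\<lambda>c::'n\<Rightarrow>int. g (\<chi> i. of_int (c i))) ` (PiE UNIV (\<lambda>_. {-M..M}))"
      using c by (auto simp: PiE_UNIV_domain)
  qed
  moreover have "finite (PiE UNIV (\<lambda>_::'n. {-M..M}))" by (rule finite_PiE) auto
  ultimately show ?thesis using finite_subset by blast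
qed

lemma full_rank_lattice_bounded_distance:
  assumes "full_rank_lattice (L :: (real^'n) set)"
  obtains R where "\<And>x. \<exists>l\<in>L. dist x l \<le> R"
proof -
  obtain g :: "real^'n \<Rightarrow> real^'n" where g: "linear g" "inj g"
    "L = range (\<lambda>c::'n\<Rightarrow>int. g (\<chi> i. of_int (c i)))"
    using full_rank_lattice_linear_image[OF assms] by metis
  obtain K where K: "\<And>x. norm (g x) \<le> K * norm x" using linear_bounded[OF g(1)] by metis
  have "\<exists>l\<in>L. dist x l \<le> \<bar>K\<bar> * CARD('n)" for x
  proof -
    obtain y where y: "x = g y" using eucl.linear_inj_imp_surj[OF g(1,2)] by (metis surjD)
    define z :: "real^'n" where "z = (\<chi> i. of_int (floor (y$i)))"
    have "g z \<in> L" unfolding z_def g(3) by (intro image_eqI[where x="\<lambda>i. floor (y$i)"]) auto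
    have "norm (y - z) \<le> (\<Sum>i\<in>UNIV. \<bar>(y - z) $ i\<bar>)" by (rule norm_le_l1_cart)
    also have "\<dots> \<le> (\<Sum>i\<in>(UNIV::'n set). 1)"
      by (intro sum_mono) (simp add: z_def, linarith)
    finally have "norm (y - z) \<le> CARD('n)" by simp
    then have "K * norm (y - z) \<le> \<bar>K\<bar> * CARD('n)"
      by (meson abs_ge_self abs_ge_zero mult_mono norm_ge_zero order_trans)
    moreover have "dist x (g z) \<le> K * norm (y - z)"
      using K[of "y - z"] g(1) by (simp add: y dist_norm linear_diff)
    ultimately show ?thesis using \<open>g z \<in> L\<close> by force
  qed
  then show ?thesis using that by blast
qed

lemma full_rank_lattice_nearest_point:
  assumes "full_rank_lattice (L :: (real^'n) set)"
  obtains l0 where "l0 \<in> L" "\<And>l. l \<in> L \<Longrightarrow> dist x l0 \<le> dist x l"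
proof -
  obtain R where R: "\<And>x. \<exists>l\<in>L. dist x l \<le> R"
    using full_rank_lattice_bounded_distance[OF assms] by metis
  define S where "S = L \<inter> cball x R"
  have "norm l \<le> norm x + R" if "l \<in> cball x R" for l
    using that norm_triangle_sub[of l x] by (simp add: dist_norm norm_minus_commute)
  then have "S \<subseteq> L \<inter> cball 0 (norm x + R)" by (auto simp: S_def)
  then have fin: "finite S"
    using finite_full_rank_lattice_Int_cball[OF assms] finite_subset by blast
  have ne: "S \<noteq> {}" using R[of x] by (auto simp: S_def)
  define l0 where "l0 = arg_min_on (dist x) S"
  have "l0 \<in> S" using arg_min_if_finite(1)[OF fin ne] by (simp add: l0_def)
  moreover have "dist x l0 \<le> dist x l" if "l \<in> L" for l
  proof (cases "l \<in> S")
    case True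
    then show ?thesis unfolding l0_def by (rule arg_min_least[OF fin ne])
  next
    case False
    with \<open>l0 \<in> S\<close> that show ?thesis by (auto simp: S_def)
  qed
  ultimately show ?thesis using that by (auto simp: S_def)
qed

lemma INF_dist_le_covering_radius:
  assumes "full_rank_lattice (L :: (real^'n) set)"
  shows "(INF l\<in>L. dist x l) \<le> covering_radius L"
proof -
  obtain R where R: "\<And>x. \<exists>l\<in>L. dist x l \<le> R"
    using full_rank_lattice_bounded_distance[OF assms] by metis
  have "(INF l\<in>L. dist y l) \<le> R" for y
    using R[of y] by (meson bdd_belowI2 zero_le_dist cINF_lower order_trans)
  then have "bdd_above (range (\<lambda>y. INF l\<in>L. dist y l))" by (intro bdd_aboveI) auto
  then show ?thesis unfolding covering_radius_def by (rule cSUP_upper[rotated]) simp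
qed

lemma nearest_point_within_covering_radius:
  assumes "full_rank_lattice (L :: (real^'n) set)"
  obtains l0 where "l0 \<in> L" "dist x l0 \<le> covering_radius L" "\<And>l. l \<in> L \<Longrightarrow> dist x l0 \<le> dist x l"
proof -
  obtain l0 where l0: "l0 \<in> L" "\<And>l. l \<in> L \<Longrightarrow> dist x l0 \<le> dist x l"
    using full_rank_lattice_nearest_point[OF assms] by metis
  then have "(INF l\<in>L. dist x l) = dist x l0"
    by (intro antisym cINF_lower cINF_greatest bdd_belowI2[of _ 0]) auto
  then show ?thesis using that l0 INF_dist_le_covering_radius[OF assms, of x] by auto
qed

lemma covering_radius_nonneg:
  assumes "full_rank_lattice (L :: (real^'n) set)"
  shows "covering_radius L \<ge> 0"
  using nearest_point_within_covering_radius[OF assms] by (metis zero_le_dist order_trans)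

definition voronoi_cell :: "(real^'n) set \<Rightarrow> (real^'n) set" where
  "voronoi_cell L = {x. \<forall>l\<in>L. norm x \<le> dist x l}"

lemma norm_le_covering_radius_if_voronoi:
  assumes "full_rank_lattice (L :: (real^'n) set)" "x \<in> voronoi_cell L"
  shows "norm x \<le> covering_radius L"
proof -
  obtain l0 where "l0 \<in> L" "dist x l0 \<le> covering_radius L"
    using nearest_point_within_covering_radius[OF assms(1)] by metis
  then show ?thesis using assms(2) unfolding voronoi_cell_def by force
qed

lemma voronoi_cell_lmeasurable:
  assumes "full_rank_lattice (L :: (real^'n) set)"
  shows "voronoi_cell L \<in> lmeasurable"
proof (rule lmeasurable_compact, unfold compact_eq_bounded_closed, intro conjI)
  show "bounded (voronoi_cell L)"
    using norm_le_covering_radius_if_voronoi[OF assms] by (intro boundedI) blast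
  have "voronoi_cell L = (\<Inter>l\<in>L. {x. norm x \<le> dist x l})"
    unfolding voronoi_cell_def by auto
  then show "closed (voronoi_cell L)"
    by (auto intro!: closed_INT closed_Collect_le continuous_intros)
qed

text \<open>Two Voronoi cells only meet on the bisecting hyperplane of their centres.\<close>
lemma negligible_voronoi_cell_Int_translate:
  assumes "full_rank_lattice (L :: (real^'n) set)" "l \<in> L" "l \<noteq> 0"
  shows "negligible (voronoi_cell L \<inter> (+) l ` voronoi_cell L)"
proof (rule negligible_subset[OF negligible_hyperplane[of "2 *\<^sub>R l" "l \<bullet> l"]])
  show "voronoi_cell L \<inter> (+) l ` voronoi_cell L \<subseteq> {x. (2 *\<^sub>R l) \<bullet> x = l \<bullet> l}"
  proof clarify
    fix y assume x: "l + y \<in> voronoi_cell L" and y: "y \<in> voronoi_cell L"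
    have "norm (l + y) \<le> dist (l + y) l"
      using x assms(2) unfolding voronoi_cell_def by blast
    moreover have "norm y \<le> dist y (- l)"
      using y full_rank_lattice_diff[OF assms(1) full_rank_lattice_zero[OF assms(1)] assms(2)]
      unfolding voronoi_cell_def by auto
    ultimately have "norm (l + y) = norm y" by (simp add: dist_norm add.commute)
    then have "(l + y) \<bullet> (l + y) = y \<bullet> y" by (metis norm_eq)
    then show "(2 *\<^sub>R l) \<bullet> (l + y) = l \<bullet> l"
      by (simp add: inner_commute algebra_simps)
  qed
qed (use assms in simp)

lemma measure_box_cart:
  assumes "\<And>i. (a::real^'n) $ i \<le> b $ i"
  shows "measure lebesgue (box a b) = (\<Prod>i\<in>UNIV. b $ i - a $ i)"
proof -
  have "measure lebesgue (box a b) = measure lborel (box a b)" by simp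
  also have "\<dots> = (\<Prod>v\<in>Basis. (b - a) \<bullet> v)"
    using assms by (subst measure_lborel_box_eq) (auto simp: Basis_vec_def cart_eq_inner_axis)
  also have "\<dots> = (\<Prod>i\<in>UNIV. b $ i - a $ i)"
    by (simp add: Basis_vec_def cart_eq_inner_axis axis_eq_axis prod.UNION_disjoint inner_diff_left)
  finally show ?thesis .
qed

lemma measure_cbox_cart:
  assumes "\<And>i. (a::real^'n) $ i \<le> b $ i"
  shows "measure lebesgue (cbox a b) = (\<Prod>i\<in>UNIV. b $ i - a $ i)"
proof -
  have "a \<in> cbox a b" using assms by (simp add: mem_box_cart)
  then show ?thesis using content_cbox_cart[of a b] by auto
qed

lemma finite_box_points_translate:
  assumes "full_rank_lattice (L :: (real^'n) set)"
  shows "finite (box_points ((+) c ` L) B)"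
proof -
  have "box_points ((+) c ` L) B \<subseteq> (+) c ` (L \<inter> cball 0 (norm c + CARD('n) * \<bar>B\<bar>))"
  proof
    fix x assume x: "x \<in> box_points ((+) c ` L) B"
    then obtain l where l: "l \<in> L" "x = c + l" unfolding box_points_def by auto
    have "norm x \<le> (\<Sum>i\<in>UNIV. \<bar>x $ i\<bar>)" by (rule norm_le_l1_cart)
    also have "\<dots> \<le> (\<Sum>i\<in>(UNIV::'n set). \<bar>B\<bar>)"
    proof (rule sum_mono)
      fix i
      have "0 \<le> x $ i \<and> x $ i < B" using x by (auto simp: box_points_def)
      then show "\<bar>x $ i\<bar> \<le> \<bar>B\<bar>" by linarith
    qed
    finally have "norm l \<le> norm c + CARD('n) * \<bar>B\<bar>"
      using l(2) norm_triangle_sub[of l "-c"] by (simp add: algebra_simps)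
    then show "x \<in> (+) c ` (L \<inter> cball 0 (norm c + CARD('n) * \<bar>B\<bar>))" using l by auto
  qed
  then show ?thesis using finite_full_rank_lattice_Int_cball[OF assms] finite_subset by blast
qed

lemma finite_box_points:
  assumes "full_rank_lattice (L :: (real^'n) set)"
  shows "finite (box_points L B)"
  using finite_box_points_translate[OF assms, of 0] by simp

lemma voronoi_cell_translate_cover:
  assumes L: "full_rank_lattice (L :: (real^'n) set)"
  obtains t where "t \<in> (+) c ` L" "norm (x - t) \<le> covering_radius L" "x - t \<in> voronoi_cell L"
proof -
  obtain l0 where l0: "l0 \<in> L" "dist (x - c) l0 \<le> covering_radius L"
    "\<And>l. l \<in> L \<Longrightarrow> dist (x - c) l0 \<le> dist (x - c) l"
    using nearest_point_within_covering_radius[OF L] by metis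
  have "x - (c + l0) \<in> voronoi_cell L" unfolding voronoi_cell_def
  proof (intro CollectI ballI)
    fix l assume "l \<in> L"
    then have "dist (x - c) l0 \<le> dist (x - c) (l0 + l)"
      using l0 full_rank_lattice_add[OF L] by blast
    then show "norm (x - (c + l0)) \<le> dist (x - (c + l0)) l" by (simp add: dist_norm algebra_simps)
  qed
  moreover have "norm (x - (c + l0)) \<le> covering_radius L"
    using l0(2) by (simp add: dist_norm algebra_simps)
  ultimately show ?thesis using that l0(1) by blast
qed

lemma pairwise_negligible_Int_voronoi_translates:
  assumes L: "full_rank_lattice (L :: (real^'n) set)" and T: "T \<subseteq> (+) c ` L"
  shows "pairwise (\<lambda>t t'. negligible ((+) t ` voronoi_cell L \<inter> (+) t' ` voronoi_cell L)) T"
proof (rule pairwiseI)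
  fix t t' assume "t \<in> T" "t' \<in> T" "t \<noteq> t'"
  then obtain a a' where "a \<in> L" "a' \<in> L" "t = c + a" "t' = c + a'" using T by blast
  then have "t' - t \<in> L" using full_rank_lattice_diff[OF L] by simp
  then have "negligible ((+) t ` (voronoi_cell L \<inter> (+) (t' - t) ` voronoi_cell L))"
    using \<open>t \<noteq> t'\<close> by (intro negligible_translation negligible_voronoi_cell_Int_translate[OF L]) auto
  moreover have "(+) t ` (voronoi_cell L \<inter> (+) (t' - t) ` voronoi_cell L)
                   = (+) t ` voronoi_cell L \<inter> (+) t' ` voronoi_cell L"
    by (auto simp: image_image image_Int)
  ultimately show "negligible ((+) t ` voronoi_cell L \<inter> (+) t' ` voronoi_cell L)" by simp
qed

lemma lattice_box_count_lower:
  assumes L: "full_rank_lattice (L :: (real^'n) set)" and B: "2 * covering_radius L \<le> B"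
  shows "(B - 2 * covering_radius L) ^ CARD('n)
           \<le> card (box_points ((+) c ` L) B) * measure lebesgue (voronoi_cell L)"
proof -
  let ?r = "covering_radius L" and ?P = "box_points ((+) c ` L) B"
  define Q :: "(real^'n) set" where "Q = box (\<chi> i. ?r) (\<chi> i. B - ?r)"
  have "Q \<subseteq> (\<Union>t\<in>?P. (+) t ` voronoi_cell L)"
  proof
    fix x assume "x \<in> Q"
    then have x: "?r < x $ i \<and> x $ i < B - ?r" for i unfolding Q_def mem_box_cart by auto
    obtain t where t: "t \<in> (+) c ` L" "norm (x - t) \<le> ?r" "x - t \<in> voronoi_cell L"
      using voronoi_cell_translate_cover[OF L] by metis
    have "t \<in> ?P" unfolding box_points_def
    proof (intro CollectI conjI allI t(1))
      fix i
      have "\<bar>x $ i - t $ i\<bar> \<le> ?r"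
        using component_le_norm_cart[of "x - t" i] t(2) by simp
      then show "0 \<le> t $ i" "t $ i < B" using x[of i] by auto
    qed
    then show "x \<in> (\<Union>t\<in>?P. (+) t ` voronoi_cell L)"
      using t(3) by (intro UN_I[of t]) (auto intro: image_eqI[where x="x - t"])
  qed
  moreover have "(+) t ` voronoi_cell L \<in> lmeasurable" for t
    using measurable_translation[OF voronoi_cell_lmeasurable[OF L]] .
  ultimately have "measure lebesgue Q \<le> (\<Sum>t\<in>?P. measure lebesgue ((+) t ` voronoi_cell L))"
    using finite_box_points_translate[OF L]
    by (intro order_trans[OF measure_mono_fmeasurable measure_UNION_le])
      (auto simp: Q_def intro!: fmeasurable.finite_UN)
  moreover have "measure lebesgue Q = (B - 2 * ?r) ^ CARD('n)"
    unfolding Q_def using B by (subst measure_box_cart) auto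
  ultimately show ?thesis by (simp add: measure_translation)
qed

lemma lattice_box_count_upper:
  assumes L: "full_rank_lattice (L :: (real^'n) set)" and B: "0 \<le> B"
  shows "card (box_points ((+) c ` L) B) * measure lebesgue (voronoi_cell L)
           \<le> (B + 2 * covering_radius L) ^ CARD('n)"
proof -
  let ?r = "covering_radius L" and ?P = "box_points ((+) c ` L) B"
  let ?T = "\<lambda>t. (+) t ` voronoi_cell L"
  define Q :: "(real^'n) set" where "Q = cbox (\<chi> i. - ?r) (\<chi> i. B + ?r)"
  have meas: "?T t \<in> lmeasurable" for t
    using measurable_translation[OF voronoi_cell_lmeasurable[OF L]] .
  have "card ?P * measure lebesgue (voronoi_cell L) = measure lebesgue (\<Union>t\<in>?P. ?T t)"
    using finite_box_points_translate[OF L] meas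
      pairwise_negligible_Int_voronoi_translates[OF L, of ?P c]
    by (simp add: measure_negligible_finite_Union_image measure_translation box_points_def)
  also have "\<dots> \<le> measure lebesgue Q"
  proof (rule measure_mono_fmeasurable)
    show "(\<Union>t\<in>?P. ?T t) \<subseteq> Q"
    proof clarify
      fix t y assume t: "t \<in> ?P" and y: "y \<in> voronoi_cell L"
      show "t + y \<in> Q" unfolding Q_def mem_box_cart
      proof
        fix i
        have "\<bar>y $ i\<bar> \<le> ?r"
          using component_le_norm_cart[of y i] norm_le_covering_radius_if_voronoi[OF L y] by linarith
        moreover have "0 \<le> t $ i \<and> t $ i < B" using t unfolding box_points_def by auto
        ultimately show "(\<chi> i. - ?r) $ i \<le> (t + y) $ i \<and> (t + y) $ i \<le> (\<chi> i. B + ?r) $ i"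
          by (simp add: abs_le_iff)
      qed
    qed
  qed (use finite_box_points_translate[OF L] meas in \<open>auto simp: Q_def intro!: fmeasurable.finite_UN\<close>)
  also have "measure lebesgue Q = (B + 2 * ?r) ^ CARD('n)"
    unfolding Q_def using B covering_radius_nonneg[OF L] by (subst measure_cbox_cart) (auto simp: ac_simps)
  finally show ?thesis .
qed

lemma voronoi_cell_measure_pos:
  assumes "full_rank_lattice (L :: (real^'n) set)"
  shows "0 < measure lebesgue (voronoi_cell L)"
proof -
  have "1 \<le> card (box_points ((+) 0 ` L) (2 * covering_radius L + 1)) * measure lebesgue (voronoi_cell L)"
    using lattice_box_count_lower[OF assms, of "2 * covering_radius L + 1" 0] by simp
  then show ?thesis by (metis less_eq_real_def measure_nonneg mult_zero_right not_one_le_zero)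
qed

lemma translate_full_rank_lattice:
  assumes "full_rank_lattice (L :: (real^'n) set)" "a \<in> L"
  shows "(+) a ` L = L"
proof
  show "(+) a ` L \<subseteq> L" using full_rank_lattice_add[OF assms] by blast
  show "L \<subseteq> (+) a ` L"
  proof
    fix y assume "y \<in> L"
    then show "y \<in> (+) a ` L"
      using full_rank_lattice_diff[OF assms(1) _ assms(2)] by (intro image_eqI[of _ _ "y - a"]) auto
  qed
qed

lemma self_mem_coset:
  assumes "full_rank_lattice (L :: (real^'n) set)"
  shows "x \<in> (+) x ` L"
  using full_rank_lattice_zero[OF assms] by (intro image_eqI[of _ _ 0]) auto

lemma coset_eq_if_mem:
  assumes "full_rank_lattice (L :: (real^'n) set)" "x \<in> (+) l ` L"
  shows "(+) l ` L = (+) x ` L"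
proof -
  obtain a where "a \<in> L" "x = l + a" using assms(2) by auto
  then have "(+) x ` L = (+) l ` ((+) a ` L)" by (simp add: image_image add.assoc)
  then show ?thesis using translate_full_rank_lattice[OF assms(1) \<open>a \<in> L\<close>] by simp
qed

lemma total_variation_from_uniform_le:
  fixes p :: "'a \<Rightarrow> real" and A :: real
  assumes S: "finite S" and sum_p: "(\<Sum>x\<in>S. p x) = 1" and A: "\<And>x. x \<in> S \<Longrightarrow> A \<le> p x"
  shows "1/2 * (\<Sum>x\<in>S. \<bar>p x - 1 / card S\<bar>) \<le> 1 - card S * A"
proof -
  let ?k = "real (card S)"
  have "S \<noteq> {}" using sum_p by auto
  then have k: "0 < ?k" using S by (simp add: card_gt_0_iff)
  have "?k * A \<le> 1" using sum_mono[of S "\<lambda>_. A" p] A sum_p by simp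
  then have A_le: "A \<le> 1 / ?k" using k by (simp add: field_simps)
  \<comment> \<open>\<open>\<bar>d\<bar> = d + 2 max (-d) 0\<close>, and the deviations \<open>d\<close> sum to zero.\<close>
  have "(\<Sum>x\<in>S. \<bar>p x - 1 / ?k\<bar>) = (\<Sum>x\<in>S. (p x - 1 / ?k) + 2 * max (1 / ?k - p x) 0)"
    by (intro sum.cong) (auto simp: max_def)
  also have "\<dots> = 2 * (\<Sum>x\<in>S. max (1 / ?k - p x) 0)"
    using sum_p k by (simp add: sum.distrib sum_subtractf sum_distrib_left)
  also have "\<dots> \<le> 2 * (\<Sum>x\<in>S. 1 / ?k - A)"
    using A A_le by (intro mult_left_mono sum_mono) auto
  also have "\<dots> = 2 * (1 - ?k * A)" using k by (simp add: field_simps)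
  finally show ?thesis by simp
qed

context
  fixes L L1 :: "(real^'n) set"
  assumes L: "full_rank_lattice L" and L1: "full_rank_lattice L1" and sub: "L1 \<subseteq> L"
begin

lemma box_points_Int_coset:
  assumes "l \<in> L"
  shows "box_points L B \<inter> (+) l ` L1 = box_points ((+) l ` L1) B"
  using full_rank_lattice_add[OF L assms] sub by (auto simp: box_points_def)

lemma card_box_points_coset_lower:
  assumes "C \<in> lattice_cosets L L1" "2 * covering_radius L1 \<le> B"
  shows "(B - 2 * covering_radius L1) ^ CARD('n)
           \<le> card (box_points L B \<inter> C) * measure lebesgue (voronoi_cell L1)"
  using assms lattice_box_count_lower[OF L1] box_points_Int_coset
  by (auto simp: lattice_cosets_def)

lemma card_box_points_coset_upper:
  assumes "C \<in> lattice_cosets L L1" "0 \<le> B"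
  shows "card (box_points L B \<inter> C) * measure lebesgue (voronoi_cell L1)
           \<le> (B + 2 * covering_radius L1) ^ CARD('n)"
  using assms lattice_box_count_upper[OF L1] box_points_Int_coset
  by (auto simp: lattice_cosets_def)

lemma coset_eq_if_mem_lattice_cosets:
  assumes "C \<in> lattice_cosets L L1" "x \<in> C"
  shows "C = (+) x ` L1"
proof -
  obtain l where l: "C = (+) l ` L1" using assms(1) unfolding lattice_cosets_def by (rule imageE)
  show ?thesis using assms(2) unfolding l by (rule coset_eq_if_mem[OF L1])
qed

lemma finite_lattice_cosets: "finite (lattice_cosets L L1)"
proof -
  let ?B = "2 * covering_radius L1 + 1"
  have "lattice_cosets L L1 \<subseteq> (\<lambda>x. (+) x ` L1) ` box_points L ?B"
  proof
    fix C assume C: "C \<in> lattice_cosets L L1"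
    have "1 \<le> card (box_points L ?B \<inter> C) * measure lebesgue (voronoi_cell L1)"
      using card_box_points_coset_lower[OF C, of ?B] by simp
    then have "box_points L ?B \<inter> C \<noteq> {}" by (intro notI) simp
    then obtain x where x: "x \<in> box_points L ?B" "x \<in> C" by blast
    have "C = (+) x ` L1" using coset_eq_if_mem_lattice_cosets[OF C x(2)] .
    then show "C \<in> (\<lambda>x. (+) x ` L1) ` box_points L ?B" using x(1) by (simp only: image_eqI)
  qed
  then show ?thesis by (rule finite_subset) (simp add: finite_box_points[OF L])
qed

lemma card_box_points_eq_sum_cosets:
  "card (box_points L B) = (\<Sum>C\<in>lattice_cosets L L1. card (box_points L B \<inter> C))"
proof -
  have "box_points L B = (\<Union>C\<in>lattice_cosets L L1. box_points L B \<inter> C)"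
  proof (intro equalityI subsetI)
    fix x assume x: "x \<in> box_points L B"
    then have "(+) x ` L1 \<in> lattice_cosets L L1"
      unfolding lattice_cosets_def box_points_def by (intro imageI) simp
    with x show "x \<in> (\<Union>C\<in>lattice_cosets L L1. box_points L B \<inter> C)"
      using self_mem_coset[OF L1] by (intro UN_I[of "(+) x ` L1"]) auto
  qed auto
  moreover have "card (\<Union>C\<in>lattice_cosets L L1. box_points L B \<inter> C)
                   = (\<Sum>C\<in>lattice_cosets L L1. card (box_points L B \<inter> C))"
  proof (rule card_UN_disjoint[OF finite_lattice_cosets]; intro ballI impI)
    fix C C' assume C: "C \<in> lattice_cosets L L1" and C': "C' \<in> lattice_cosets L L1" and "C \<noteq> C'"
    have "x \<notin> C'" if "x \<in> C" for x
      using coset_eq_if_mem_lattice_cosets[OF C that] coset_eq_if_mem_lattice_cosets[OF C', of x]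
        \<open>C \<noteq> C'\<close> by auto
    then show "box_points L B \<inter> C \<inter> (box_points L B \<inter> C') = {}" by blast
  qed (use finite_box_points[OF L] in blast)
  ultimately show ?thesis by simp
qed

lemma voronoi_measure_le_index:
  "measure lebesgue (voronoi_cell L1) \<le> card (lattice_cosets L L1) * measure lebesgue (voronoi_cell L)"
proof -
  let ?n = "CARD('n)" and ?k = "card (lattice_cosets L L1)"
  let ?r = "covering_radius L" and ?r1 = "covering_radius L1"
  let ?V = "measure lebesgue (voronoi_cell L)" and ?V1 = "measure lebesgue (voronoi_cell L1)"
  have bound: "?V1 * ((B - 2 * ?r) / (B + 2 * ?r1)) ^ ?n \<le> ?k * ?V" if B: "2 * ?r < B" for B
  proof -
    have B0: "0 < B" using B covering_radius_nonneg[OF L] by linarith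
    then have pos: "0 < B + 2 * ?r1" using covering_radius_nonneg[OF L1] by linarith
    have "card (box_points L B) * ?V1 = (\<Sum>C\<in>lattice_cosets L L1. card (box_points L B \<inter> C) * ?V1)"
      by (simp add: card_box_points_eq_sum_cosets sum_distrib_right)
    also have "\<dots> \<le> (\<Sum>C\<in>lattice_cosets L L1. (B + 2 * ?r1) ^ ?n)"
      using B0 by (intro sum_mono card_box_points_coset_upper) auto
    finally have up: "card (box_points L B) * ?V1 \<le> ?k * (B + 2 * ?r1) ^ ?n" by simp
    have "(B - 2 * ?r) ^ ?n * ?V1 \<le> card (box_points L B) * ?V * ?V1"
      using lattice_box_count_lower[OF L, of B 0] B by (simp add: mult_right_mono)
    also have "\<dots> \<le> ?k * (B + 2 * ?r1) ^ ?n * ?V"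
      using mult_right_mono[OF up, of ?V] by (simp add: ac_simps)
    finally show ?thesis using pos by (simp add: power_divide field_simps)
  qed
  have "(\<lambda>m. ?V1 * ((real m - 2 * ?r) / (real m + 2 * ?r1)) ^ ?n) \<longlonglongrightarrow> ?V1 * 1 ^ ?n"
    by (intro tendsto_intros) real_asymp
  moreover have "\<forall>\<^sub>F m in sequentially. ?V1 * ((real m - 2 * ?r) / (real m + 2 * ?r1)) ^ ?n \<le> ?k * ?V"
    using eventually_gt_at_top[of "nat \<lceil>2 * ?r\<rceil>"] by eventually_elim (intro bound, linarith)
  ultimately show ?thesis using tendsto_le[OF trivial_limit_sequentially tendsto_const] by simp
qed

lemma card_box_points_pos:
  assumes B: "2 * covering_radius L1 < B"
  shows "0 < card (box_points L B)"
proof -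
  have "(+) 0 ` L1 \<in> lattice_cosets L L1"
    unfolding lattice_cosets_def using full_rank_lattice_zero[OF L] by (rule imageI)
  then have "0 < card (box_points L B \<inter> (+) 0 ` L1) * measure lebesgue (voronoi_cell L1)"
    using card_box_points_coset_lower[of _ B] B by (smt (verit) zero_less_power)
  then have "0 < card (box_points L B \<inter> (+) 0 ` L1)" by (simp add: zero_less_mult_iff)
  also have "\<dots> \<le> card (box_points L B)" by (intro card_mono finite_box_points[OF L]) auto
  finally show ?thesis .
qed

lemma coset_tv_le:
  assumes B: "2 * covering_radius L1 < B"
  shows "coset_tv L L1 B \<le> 1 - card (lattice_cosets L L1) * (B - 2 * covering_radius L1) ^ CARD('n)
                                / (measure lebesgue (voronoi_cell L1) * card (box_points L B))"
proof -
  let ?N = "real (card (box_points L B))" and ?V1 = "measure lebesgue (voronoi_cell L1)"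
  let ?s = "(B - 2 * covering_radius L1) ^ CARD('n)"
  have V1: "0 < ?V1" by (rule voronoi_cell_measure_pos[OF L1])
  have N: "0 < ?N" using card_box_points_pos[OF B] by simp
  have sum_1: "(\<Sum>C\<in>lattice_cosets L L1. card (box_points L B \<inter> C) / ?N) = 1"
    using N by (simp add: card_box_points_eq_sum_cosets[of B] sum_divide_distrib[symmetric])
  have "?s / (?V1 * ?N) \<le> card (box_points L B \<inter> C) / ?N" if "C \<in> lattice_cosets L L1" for C
    using card_box_points_coset_lower[OF that, of B] B V1 N by (simp add: field_simps)
  from total_variation_from_uniform_le[OF finite_lattice_cosets sum_1 this]
  show ?thesis unfolding coset_tv_def by simp
qed

end

theorem lemma2p5:
  fixes L L1 :: "(real^'n) set" and B1 :: real
  assumes "full_rank_lattice L"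
    and "full_rank_lattice L1"
    and "L1 \<subseteq> L"
    and "B1 > 2 * covering_radius L1"
  shows "coset_tv L L1 B1 \<le>
           1 - (B1 - 2 * covering_radius L1) ^ CARD('n) / (B1 + 2 * covering_radius L) ^ CARD('n)"
proof -
  note L = assms(1) and L1 = assms(2) and sub = assms(3) and B1 = assms(4)
  let ?s = "(B1 - 2 * covering_radius L1) ^ CARD('n)" and ?T = "(B1 + 2 * covering_radius L) ^ CARD('n)"
  let ?N = "real (card (box_points L B1))" and ?k = "real (card (lattice_cosets L L1))"
  let ?V = "measure lebesgue (voronoi_cell L)" and ?V1 = "measure lebesgue (voronoi_cell L1)"
  have pos: "0 < ?N" "0 < ?V" "0 < ?V1" "0 \<le> ?s"
    using card_box_points_pos[OF L L1 sub B1] voronoi_cell_measure_pos[OF L]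
      voronoi_cell_measure_pos[OF L1] B1 by simp_all
  have "?N * ?V \<le> ?T"
    using lattice_box_count_upper[OF L, of B1 0] B1 covering_radius_nonneg[OF L1] by simp
  moreover have "0 < ?N * ?V" using pos by simp
  ultimately have "?s / ?T \<le> ?s / (?N * ?V)"
    using pos(4) by (intro divide_left_mono) (auto intro: mult_pos_pos less_le_trans)
  also have "\<dots> \<le> ?k * ?s / (?V1 * ?N)"
    using mult_left_mono[OF voronoi_measure_le_index[OF L L1 sub] pos(4)] pos
    by (simp add: field_simps)
  finally show ?thesis using coset_tv_le[OF L L1 sub B1] by simp
qed

end
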